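(* Let $G$ be a finite group, $\mathsf K$ a simplicial $G$-complex and $\mathsf K'$ a $G$-subcomplex of $\mathsf K$. Then $\mathsf K$ $G$-collapses onto $\mathsf K'$ if and only if there is an acyclic partial $G$-matching on $\mathcal F(\mathsf K)$ whose set of critical elements is exactly $\mathcal F(\mathsf K')$.
   Context: A simplicial $G$-complex is a simplicial complex with a right action of $G$ by simplicial automorphisms; a $G$-subcomplex is a $G$-invariant subcomplex. $\mathcal F(\mathsf K)$ is the poset of nonempty simplices of $\mathsf K$ ordered by inclusion; $x\succ y$ ($x$ covers $y$) means $y<x$ with nothing strictly between. A facet is a maximal simplex; a simplex $\sigma$ is free if it is a proper face of exactly one facet $\varphi_\sigma$. A collection of free simplices is independently free if no two distinct members have a common coface. For a free $\sigma$ with $\dim\varphi_\sigma=\dim\sigma+1$ and $\sigma G$ independently free, an elementary $G$-collapse replaces $\mathsf K$ by the subcomplex of simplices having no $\sigma g$ ($g\in G$) as a face. $\mathsf K$ $G$-collapses onto $\mathsf K'$ if there is a finite sequence of elementary $G$-collapses leading from $\mathsf K$ to $\mathsf K'$. A partial $G$-matching on $\mathcal F(\mathsf K)$ is a pair $(\Sigma,\mu)$ of a $G$-invariant subset $\Sigma\subseteq\mathcal F(\mathsf K)$ and a $G$-equivariant injection $\mu:\Sigma\to\mathcal F(\mathsf K)\setminus\Sigma$ with $\mu(x)\succ x$ for all $x\in\Sigma$. Its critical elements are those of $\mathcal F(\mathsf K)\setminus(\Sigma\cup\mu(\Sigma))$. It is acyclic if there is no sequence of distinct $x_0,\dots,x_t\in\Sigma$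 ($t\ge1$) with $\mu(x_0)\succ x_1,\ \mu(x_1)\succ x_2,\dots,\mu(x_{t-1})\succ x_t$ and $\mu(x_t)\succ x_0$. *)

theory Defs
  imports "HOL-Algebra.Group"
begin

definition simplicial_complex :: "'v set set \<Rightarrow> bool" where
  "simplicial_complex K \<longleftrightarrow> finite K \<and>
     (\<forall>\<sigma>\<in>K. finite \<sigma> \<and> \<sigma> \<noteq> {}) \<and>
     (\<forall>\<sigma>\<in>K. \<forall>\<tau>. \<tau> \<subseteq> \<sigma> \<and> \<tau> \<noteq> {} \<longrightarrow> \<tau> \<in> K)"

definition sact :: "('v \<Rightarrow> 'g \<Rightarrow> 'v) \<Rightarrow> 'v set \<Rightarrow> 'g \<Rightarrow> 'v set" where
  "sact act \<sigma> g = (\<lambda>v. act v g) ` \<sigma>"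

definition G_invariant :: "('g, 'b) monoid_scheme \<Rightarrow> ('v \<Rightarrow> 'g \<Rightarrow> 'v) \<Rightarrow> 'v set set \<Rightarrow> bool" where
  "G_invariant G act S \<longleftrightarrow> (\<forall>\<sigma>\<in>S. \<forall>g\<in>carrier G. sact act \<sigma> g \<in> S)"

definition simplicial_G_complex ::
  "('g, 'b) monoid_scheme \<Rightarrow> ('v \<Rightarrow> 'g \<Rightarrow> 'v) \<Rightarrow> 'v set set \<Rightarrow> bool" where
  "simplicial_G_complex G act K \<longleftrightarrow> simplicial_complex K \<and>
     (\<forall>v\<in>\<Union>K. act v \<one>\<^bsub>G\<^esub> = v) \<and>
     (\<forall>v\<in>\<Union>K. \<forall>g\<in>carrier G. \<forall>h\<in>carrier G. act (act v g) h = act v (g \<otimes>\<^bsub>G\<^esub> h)) \<and>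
     G_invariant G act K"

definition G_subcomplex ::
  "('g, 'b) monoid_scheme \<Rightarrow> ('v \<Rightarrow> 'g \<Rightarrow> 'v) \<Rightarrow> 'v set set \<Rightarrow> 'v set set \<Rightarrow> bool" where
  "G_subcomplex G act K K' \<longleftrightarrow> K' \<subseteq> K \<and> simplicial_complex K' \<and> G_invariant G act K'"

definition orbit :: "('g, 'b) monoid_scheme \<Rightarrow> ('v \<Rightarrow> 'g \<Rightarrow> 'v) \<Rightarrow> 'v set \<Rightarrow> 'v set set" where
  "orbit G act \<sigma> = {sact act \<sigma> g | g. g \<in> carrier G}"

definition facet :: "'v set set \<Rightarrow> 'v set \<Rightarrow> bool" where
  "facet K \<phi> \<longleftrightarrow> \<phi> \<in> K \<and> \<not> (\<exists>\<tau>\<in>K. \<phi> \<subset> \<tau>)"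

definition free_simplex :: "'v set set \<Rightarrow> 'v set \<Rightarrow> bool" where
  "free_simplex K \<sigma> \<longleftrightarrow> \<sigma> \<in> K \<and> (\<exists>!\<phi>. facet K \<phi> \<and> \<sigma> \<subset> \<phi>)"

definition free_facet :: "'v set set \<Rightarrow> 'v set \<Rightarrow> 'v set" where
  "free_facet K \<sigma> = (THE \<phi>. facet K \<phi> \<and> \<sigma> \<subset> \<phi>)"

definition independently_free :: "'v set set \<Rightarrow> 'v set set \<Rightarrow> bool" where
  "independently_free K S \<longleftrightarrow> (\<forall>\<sigma>\<in>S. free_simplex K \<sigma>) \<and>
     (\<forall>\<sigma>\<in>S. \<forall>\<tau>\<in>S. \<sigma> \<noteq> \<tau> \<longrightarrow> \<not> (\<exists>\<rho>\<in>K. \<sigma> \<subseteq> \<rho> \<and> \<tau> \<subseteq> \<rho>))"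

text \<open>dim = card - 1, so dim phi = dim sigma + 1 iff card phi = card sigma + 1.\<close>
definition elementary_G_collapse ::
  "('g, 'b) monoid_scheme \<Rightarrow> ('v \<Rightarrow> 'g \<Rightarrow> 'v) \<Rightarrow> 'v set set \<Rightarrow> 'v set set \<Rightarrow> bool" where
  "elementary_G_collapse G act K K2 \<longleftrightarrow> (\<exists>\<sigma>. free_simplex K \<sigma> \<and>
     card (free_facet K \<sigma>) = card \<sigma> + 1 \<and>
     independently_free K (orbit G act \<sigma>) \<and>
     K2 = {\<rho>\<in>K. \<forall>g\<in>carrier G. \<not> sact act \<sigma> g \<subseteq> \<rho>})"

definition G_collapses ::
  "('g, 'b) monoid_scheme \<Rightarrow> ('v \<Rightarrow> 'g \<Rightarrow> 'v) \<Rightarrow> 'v set set \<Rightarrow> 'v set set \<Rightarrow> bool" where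
  "G_collapses G act K K' \<longleftrightarrow> (elementary_G_collapse G act)\<^sup>*\<^sup>* K K'"

definition covers :: "'v set set \<Rightarrow> 'v set \<Rightarrow> 'v set \<Rightarrow> bool" where
  "covers K x y \<longleftrightarrow> x \<in> K \<and> y \<in> K \<and> y \<subset> x \<and> \<not> (\<exists>z\<in>K. y \<subset> z \<and> z \<subset> x)"

definition partial_G_matching ::
  "('g, 'b) monoid_scheme \<Rightarrow> ('v \<Rightarrow> 'g \<Rightarrow> 'v) \<Rightarrow> 'v set set \<Rightarrow> 'v set set
     \<Rightarrow> ('v set \<Rightarrow> 'v set) \<Rightarrow> bool" where
  "partial_G_matching G act K S \<mu> \<longleftrightarrow> S \<subseteq> K \<and> G_invariant G act S \<and>
     \<mu> ` S \<subseteq> K - S \<and> inj_on \<mu> S \<and>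
     (\<forall>x\<in>S. \<forall>g\<in>carrier G. \<mu> (sact act x g) = sact act (\<mu> x) g) \<and>
     (\<forall>x\<in>S. covers K (\<mu> x) x)"

definition critical :: "'v set set \<Rightarrow> 'v set set \<Rightarrow> ('v set \<Rightarrow> 'v set) \<Rightarrow> 'v set set" where
  "critical K S \<mu> = K - (S \<union> \<mu> ` S)"

definition acyclic_matching :: "'v set set \<Rightarrow> 'v set set \<Rightarrow> ('v set \<Rightarrow> 'v set) \<Rightarrow> bool" where
  "acyclic_matching K S \<mu> \<longleftrightarrow> \<not> (\<exists>xs. length xs \<ge> 2 \<and> distinct xs \<and> set xs \<subseteq> S \<and>
      (\<forall>i. Suc i < length xs \<longrightarrow> covers K (\<mu> (xs ! i)) (xs ! Suc i)) \<and>
      covers K (\<mu> (last xs)) (hd xs))"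

end

theory Submission
  imports Defs
begin

text \<open>
  An elementary G-collapse removes the orbits of a free simplex \<sigma> and of its facet \<phi>;
  matching \<sigma>g with \<phi>g is G-equivariant, and no path of the matching re-enters the orbit
  of \<sigma> because \<phi>g is the only proper coface of \<sigma>g. By induction along the collapse
  the removed pairs form an acyclic G-matching whose critical simplices are those of K'.
  Conversely, among the matched pairs of an acyclic G-matching choose (\<sigma>, \<mu> \<sigma>) with
  \<mu> \<sigma> of maximal dimension and with \<mu> \<sigma> the only proper coface of \<sigma>; such a pair
  exists, since otherwise the other cofaces would themselves be matched simplices of maximal
  dimension and would close a cycle. Removing its orbit is an elementary G-collapse after which
  the rest of the matching is still an acyclic G-matching with the same critical simplices,
  so induction on the number of matched simplices finishes the proof.
\<close>

section \<open>Simplicial complexes and acyclic matchings\<close>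

lemma simplicial_complexD:
  assumes "simplicial_complex L"
  shows simplicial_complex_finite: "finite L"
    and simplicial_complex_finite_simplex: "\<sigma> \<in> L \<Longrightarrow> finite \<sigma>"
    and simplicial_complex_nonempty: "\<sigma> \<in> L \<Longrightarrow> \<sigma> \<noteq> {}"
    and simplicial_complex_face: "\<sigma> \<in> L \<Longrightarrow> \<tau> \<subseteq> \<sigma> \<Longrightarrow> \<tau> \<noteq> {} \<Longrightarrow> \<tau> \<in> L"
  using assms unfolding simplicial_complex_def by blast+

lemma covers_iff_card:
  assumes L: "simplicial_complex L"
  shows "covers L x y \<longleftrightarrow> x \<in> L \<and> y \<noteq> {} \<and> y \<subset> x \<and> card x = Suc (card y)"
proof
  assume "covers L x y"
  then have x: "x \<in> L" and y: "y \<in> L" and "y \<subset> x" and no_between: "\<not> (\<exists>z\<in>L. y \<subset> z \<and> z \<subset> x)"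
    unfolding covers_def by blast+
  then obtain v where v: "v \<in> x" "v \<notin> y" by blast
  have "finite x" using simplicial_complex_finite_simplex[OF L x] .
  then have "finite y" using \<open>y \<subset> x\<close> by (meson finite_subset psubset_imp_subset)
  have "insert v y \<in> L"
    using simplicial_complex_face[OF L x, of "insert v y"] v \<open>y \<subset> x\<close> by blast
  then have "\<not> insert v y \<subset> x" using no_between v by blast
  then have "insert v y = x" using v \<open>y \<subset> x\<close> by blast
  then show "x \<in> L \<and> y \<noteq> {} \<and> y \<subset> x \<and> card x = Suc (card y)"
    using x \<open>y \<subset> x\<close> \<open>finite y\<close> v simplicial_complex_nonempty[OF L y] by auto
next
  assume h: "x \<in> L \<and> y \<noteq> {} \<and> y \<subset> x \<and> card x = Suc (card y)"
  then have "finite x" using simplicial_complex_finite_simplex[OF L] by blast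
  have "\<not> (y \<subset> z \<and> z \<subset> x)" for z
  proof
    assume z: "y \<subset> z \<and> z \<subset> x"
    then have "finite z" using \<open>finite x\<close> by (meson finite_subset psubset_imp_subset)
    then have "card y < card z" "card z < card x"
      using z psubset_card_mono \<open>finite x\<close> by blast+
    then show False using h by simp
  qed
  moreover have "y \<in> L" using h simplicial_complex_face[OF L] by blast
  ultimately show "covers L x y" using h unfolding covers_def by blast
qed

lemma covers_subcomplex_iff:
  assumes "simplicial_complex L" "simplicial_complex L'" "L' \<subseteq> L"
  shows "covers L' x y \<longleftrightarrow> x \<in> L' \<and> covers L x y"
  using covers_iff_card[OF assms(1)] covers_iff_card[OF assms(2)] assms(3) by auto

lemma facet_exists_above:
  assumes "simplicial_complex L" "\<tau> \<in> L"
  shows "\<exists>\<psi>. facet L \<psi> \<and> \<tau> \<subseteq> \<psi>"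
proof -
  have "finite {\<psi>\<in>L. \<tau> \<subseteq> \<psi>}" using simplicial_complex_finite[OF assms(1)] by simp
  moreover have "{\<psi>\<in>L. \<tau> \<subseteq> \<psi>} \<noteq> {}" using assms(2) by blast
  ultimately obtain \<psi> where \<psi>: "\<psi> \<in> L" "\<tau> \<subseteq> \<psi>"
    and maximal: "\<And>\<rho>. \<rho> \<in> L \<Longrightarrow> \<tau> \<subseteq> \<rho> \<Longrightarrow> \<psi> \<subseteq> \<rho> \<Longrightarrow> \<psi> = \<rho>"
    using finite_has_maximal[of "{\<psi>\<in>L. \<tau> \<subseteq> \<psi>}"] by auto
  have "facet L \<psi>"
    unfolding facet_def using \<psi> maximal by (metis order.trans psubset_imp_subset order.strict_iff_not)
  then show ?thesis using \<psi>(2) by blast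
qed

lemma finite_funpow_cycle:
  assumes "finite T" "x \<in> T" "\<And>y. y \<in> T \<Longrightarrow> f y \<in> T" "\<And>y. y \<in> T \<Longrightarrow> f y \<noteq> y"
  shows "\<exists>xs. 2 \<le> length xs \<and> distinct xs \<and> set xs \<subseteq> T \<and>
           (\<forall>k. Suc k < length xs \<longrightarrow> xs ! k = f (xs ! Suc k)) \<and> last xs = f (hd xs)"
proof -
  define z where "z k = (f ^^ k) x" for k
  have z_in: "z k \<in> T" for k
    unfolding z_def by (induction k) (auto simp: assms(2,3))
  have z_Suc: "z (Suc k) = f (z k)" for k
    unfolding z_def by simp
  have "\<not> inj_on z {0..card T}"
  proof
    assume "inj_on z {0..card T}"
    then have "card (z ` {0..card T}) = Suc (card T)" by (simp add: card_image)
    moreover have "card (z ` {0..card T}) \<le> card T"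
      using z_in by (intro card_mono[OF assms(1)]) auto
    ultimately show False by simp
  qed
  then obtain i0 j0 where "i0 < j0" "z i0 = z j0"
    unfolding inj_on_def by (metis linorder_neqE_nat)
  define j where "j = (LEAST j. \<exists>i<j. z i = z j)"
  have "\<exists>i<j. z i = z j"
    unfolding j_def
    by (rule LeastI[where P = "\<lambda>j. \<exists>i<j. z i = z j" and k = j0]) (use \<open>i0 < j0\<close> \<open>z i0 = z j0\<close> in blast)
  then obtain i where "i < j" "z i = z j" by blast
  have no_repeat: "z p \<noteq> z q" if "p < q" "q < j" for p q
  proof
    assume "z p = z q"
    then have "j \<le> q" unfolding j_def using \<open>p < q\<close> by (blast intro: Least_le)
    then show False using \<open>q < j\<close> by simp
  qed
  have "j \<noteq> Suc i" using \<open>z i = z j\<close> z_Suc assms(4)[OF z_in] by metis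
  define xs where "xs = map (\<lambda>k. z (j - Suc k)) [0..<j - i]"
  have "inj_on (\<lambda>k. z (j - Suc k)) {0..<j - i}"
  proof (rule inj_onI, rule ccontr)
    fix a b assume a: "a \<in> {0..<j - i}" and b: "b \<in> {0..<j - i}"
      and eq: "z (j - Suc a) = z (j - Suc b)" and "a \<noteq> b"
    then have "a < j - i" "b < j - i" "a \<noteq> b" by auto
    then consider "j - Suc b < j - Suc a" "j - Suc a < j" | "j - Suc a < j - Suc b" "j - Suc b < j"
      by arith
    then show False using no_repeat eq by metis
  qed
  then have "distinct xs" unfolding xs_def by (simp add: distinct_map)
  moreover have "\<forall>k. Suc k < length xs \<longrightarrow> xs ! k = f (xs ! Suc k)"
  proof (intro allI impI)
    fix k assume "Suc k < length xs"
    then have "Suc k < j - i" "j - Suc k = Suc (j - Suc (Suc k))" unfolding xs_def by auto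
    then show "xs ! k = f (xs ! Suc k)" unfolding xs_def using z_Suc by simp
  qed
  moreover have "last xs = f (hd xs)"
    unfolding xs_def using \<open>i < j\<close> \<open>z i = z j\<close> z_Suc[of "j - 1"]
    by (simp add: last_map hd_map)
  moreover have "set xs \<subseteq> T" "2 \<le> length xs"
    unfolding xs_def using z_in \<open>i < j\<close> \<open>j \<noteq> Suc i\<close> by auto
  ultimately show ?thesis by blast
qed

definition cyclic_set :: "'v set set \<Rightarrow> ('v set \<Rightarrow> 'v set) \<Rightarrow> 'v set set \<Rightarrow> bool" where
  "cyclic_set L \<mu> T \<longleftrightarrow> finite T \<and> T \<noteq> {} \<and> (\<forall>x\<in>T. \<exists>y\<in>T. y \<noteq> x \<and> covers L (\<mu> y) x)"

text \<open>A cyclic set yields a cycle by iterating a choice of predecessors until it repeats.\<close>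

lemma acyclic_matching_iff_no_cyclic_set:
  "acyclic_matching L S \<mu> \<longleftrightarrow> \<not> (\<exists>T\<subseteq>S. cyclic_set L \<mu> T)"
proof
  assume acyclic: "acyclic_matching L S \<mu>"
  show "\<not> (\<exists>T\<subseteq>S. cyclic_set L \<mu> T)"
  proof
    assume "\<exists>T\<subseteq>S. cyclic_set L \<mu> T"
    then obtain T x where T: "T \<subseteq> S" "finite T" "x \<in> T"
      and pred: "\<forall>x\<in>T. \<exists>y\<in>T. y \<noteq> x \<and> covers L (\<mu> y) x"
      unfolding cyclic_set_def by blast
    define f where "f x = (SOME y. y \<in> T \<and> y \<noteq> x \<and> covers L (\<mu> y) x)" for x
    have f: "f x \<in> T \<and> f x \<noteq> x \<and> covers L (\<mu> (f x)) x" if "x \<in> T" for x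
    proof -
      have "\<exists>y. y \<in> T \<and> y \<noteq> x \<and> covers L (\<mu> y) x" using pred that by blast
      then show ?thesis unfolding f_def by (rule someI_ex)
    qed
    obtain xs where xs: "2 \<le> length xs" "distinct xs" "set xs \<subseteq> T"
      and step: "\<forall>k. Suc k < length xs \<longrightarrow> xs ! k = f (xs ! Suc k)" and wrap: "last xs = f (hd xs)"
      using finite_funpow_cycle[OF T(2,3), of f] f by blast
    have "covers L (\<mu> (xs ! k)) (xs ! Suc k)" if "Suc k < length xs" for k
    proof -
      have "xs ! Suc k \<in> T" using xs(3) nth_mem[OF that] by blast
      then show ?thesis using step f that by auto
    qed
    moreover have "covers L (\<mu> (last xs)) (hd xs)"
    proof -
      have "xs \<noteq> []" using xs(1) by auto
      then have "hd xs \<in> T" using xs(3) hd_in_set by blast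
      then show ?thesis using wrap f by auto
    qed
    moreover have "set xs \<subseteq> S" using xs(3) T(1) by blast
    ultimately show False
      using acyclic xs(1,2) unfolding acyclic_matching_def by blast
  qed
next
  assume no_cyclic: "\<not> (\<exists>T\<subseteq>S. cyclic_set L \<mu> T)"
  show "acyclic_matching L S \<mu>"
    unfolding acyclic_matching_def
  proof
    assume "\<exists>xs. 2 \<le> length xs \<and> distinct xs \<and> set xs \<subseteq> S \<and>
      (\<forall>i. Suc i < length xs \<longrightarrow> covers L (\<mu> (xs ! i)) (xs ! Suc i)) \<and> covers L (\<mu> (last xs)) (hd xs)"
    then obtain xs where xs: "2 \<le> length xs" "distinct xs" "set xs \<subseteq> S"
      and step: "\<And>i. Suc i < length xs \<Longrightarrow> covers L (\<mu> (xs ! i)) (xs ! Suc i)"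
      and wrap: "covers L (\<mu> (last xs)) (hd xs)" by blast
    have "\<exists>y\<in>set xs. y \<noteq> xs ! j \<and> covers L (\<mu> y) (xs ! j)" if "j < length xs" for j
    proof (cases j)
      case 0
      have "xs \<noteq> []" using xs(1) by auto
      then have "last xs = xs ! (length xs - 1)" "hd xs = xs ! 0"
        by (simp_all add: last_conv_nth hd_conv_nth)
      moreover have "xs ! (length xs - 1) \<noteq> xs ! 0"
        using xs(1) \<open>xs \<noteq> []\<close> nth_eq_iff_index_eq[OF xs(2), of "length xs - 1" 0] by simp
      ultimately show ?thesis using wrap 0 last_in_set[OF \<open>xs \<noteq> []\<close>] by metis
    next
      case (Suc k)
      then have "xs ! k \<noteq> xs ! j" using xs(2) that by (simp add: nth_eq_iff_index_eq)
      moreover have "xs ! k \<in> set xs" using that Suc by simp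
      ultimately show ?thesis using step[of k] that Suc by blast
    qed
    then have "cyclic_set L \<mu> (set xs)"
      unfolding cyclic_set_def using xs(1) by (auto simp: in_set_conv_nth)
    then show False using no_cyclic xs(3) by blast
  qed
qed

lemma acyclic_matching_subcomplex:
  assumes "acyclic_matching L S \<mu>" "S' \<subseteq> S"
    and "simplicial_complex L" "simplicial_complex L'" "L' \<subseteq> L"
  shows "acyclic_matching L' S' \<mu>"
proof -
  have "cyclic_set L \<mu> T" if "cyclic_set L' \<mu> T" for T
    using that covers_subcomplex_iff[OF assms(3-5)] unfolding cyclic_set_def by blast
  then show ?thesis
    using assms(1,2) unfolding acyclic_matching_iff_no_cyclic_set by blast
qed

lemma G_subcomplex_simplicial_complex: "G_subcomplex G act K L \<Longrightarrow> simplicial_complex L"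
  unfolding G_subcomplex_def by blast

lemma G_invariant_Un:
  "G_invariant G act A \<Longrightarrow> G_invariant G act B \<Longrightarrow> G_invariant G act (A \<union> B)"
  unfolding G_invariant_def by blast

section \<open>Simplicial G-complexes\<close>

locale G_complex = group G for G :: "('g, 'b) monoid_scheme" (structure) +
  fixes act :: "'v \<Rightarrow> 'g \<Rightarrow> 'v" and K :: "'v set set"
  assumes simplicial_G_complex: "simplicial_G_complex G act K"
begin

abbreviation V :: "'v set" where "V \<equiv> \<Union>K"

lemma act_one: "v \<in> V \<Longrightarrow> act v \<one> = v"
  and act_mult: "v \<in> V \<Longrightarrow> g \<in> carrier G \<Longrightarrow> h \<in> carrier G \<Longrightarrow> act (act v g) h = act v (g \<otimes> h)"
  using simplicial_G_complex unfolding simplicial_G_complex_def by blast+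

lemma act_inv_cancel: "v \<in> V \<Longrightarrow> g \<in> carrier G \<Longrightarrow> act (act v g) (inv g) = v"
  by (simp add: act_mult act_one)

lemma sact_one: "\<rho> \<subseteq> V \<Longrightarrow> sact act \<rho> \<one> = \<rho>"
  unfolding sact_def using act_one by (simp add: subset_iff)

lemma sact_mult:
  "\<rho> \<subseteq> V \<Longrightarrow> g \<in> carrier G \<Longrightarrow> h \<in> carrier G \<Longrightarrow> sact act (sact act \<rho> g) h = sact act \<rho> (g \<otimes> h)"
  unfolding sact_def image_image using act_mult by (auto simp: subset_iff)

lemma sact_inv_cancel: "\<rho> \<subseteq> V \<Longrightarrow> g \<in> carrier G \<Longrightarrow> sact act (sact act \<rho> g) (inv g) = \<rho>"
  using sact_mult sact_one by simp

lemma sact_cancel_inv: "\<rho> \<subseteq> V \<Longrightarrow> g \<in> carrier G \<Longrightarrow> sact act (sact act \<rho> (inv g)) g = \<rho>"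
  using sact_mult sact_one by simp

lemma sact_subset_iff:
  assumes "\<rho> \<subseteq> V" "\<tau> \<subseteq> V" "g \<in> carrier G"
  shows "sact act \<rho> g \<subseteq> sact act \<tau> g \<longleftrightarrow> \<rho> \<subseteq> \<tau>"
proof
  assume "sact act \<rho> g \<subseteq> sact act \<tau> g"
  then have "sact act (sact act \<rho> g) (inv g) \<subseteq> sact act (sact act \<tau> g) (inv g)"
    unfolding sact_def by (rule image_mono)
  then show "\<rho> \<subseteq> \<tau>" using sact_inv_cancel assms by simp
qed (unfold sact_def, rule image_mono)

lemma sact_eq_iff:
  "\<rho> \<subseteq> V \<Longrightarrow> \<tau> \<subseteq> V \<Longrightarrow> g \<in> carrier G \<Longrightarrow> sact act \<rho> g = sact act \<tau> g \<longleftrightarrow> \<rho> = \<tau>"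
  using sact_subset_iff[of \<rho> \<tau> g] sact_subset_iff[of \<tau> \<rho> g] by auto

lemma sact_psubset_iff:
  "\<rho> \<subseteq> V \<Longrightarrow> \<tau> \<subseteq> V \<Longrightarrow> g \<in> carrier G \<Longrightarrow> sact act \<rho> g \<subset> sact act \<tau> g \<longleftrightarrow> \<rho> \<subset> \<tau>"
  using sact_subset_iff[of \<rho> \<tau> g] sact_eq_iff[of \<rho> \<tau> g] by auto

lemma card_sact: "\<rho> \<subseteq> V \<Longrightarrow> g \<in> carrier G \<Longrightarrow> card (sact act \<rho> g) = card \<rho>"
proof -
  assume "\<rho> \<subseteq> V" "g \<in> carrier G"
  then have "inj_on (\<lambda>v. act v g) \<rho>"
    by (intro inj_on_inverseI[where g = "\<lambda>v. act v (inv g)"]) (use act_inv_cancel in blast)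
  then show ?thesis unfolding sact_def by (rule card_image)
qed

lemma orbit_iff: "x \<in> orbit G act \<sigma> \<longleftrightarrow> (\<exists>g\<in>carrier G. x = sact act \<sigma> g)"
  unfolding orbit_def by blast

lemma self_in_orbit: "\<sigma> \<subseteq> V \<Longrightarrow> \<sigma> \<in> orbit G act \<sigma>"
  unfolding orbit_iff using one_closed sact_one[symmetric] by (rule bexI[rotated])

lemma G_invariant_orbit:
  assumes "\<sigma> \<subseteq> V"
  shows "G_invariant G act (orbit G act \<sigma>)"
  unfolding G_invariant_def
proof (intro ballI)
  fix x g assume "x \<in> orbit G act \<sigma>" "g \<in> carrier G"
  then obtain h where "h \<in> carrier G" "x = sact act \<sigma> h" by (auto simp: orbit_iff)
  then show "sact act x g \<in> orbit G act \<sigma>"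
    using sact_mult[OF assms] \<open>g \<in> carrier G\<close> unfolding orbit_iff by (intro bexI[of _ "h \<otimes> g"]) auto
qed

lemma G_invariant_Diff:
  assumes "G_invariant G act A" "G_invariant G act B" "\<forall>x\<in>A. x \<subseteq> V"
  shows "G_invariant G act (A - B)"
  unfolding G_invariant_def
proof (intro ballI)
  fix x g assume x: "x \<in> A - B" and g: "g \<in> carrier G"
  have "sact act x g \<notin> B"
  proof
    assume "sact act x g \<in> B"
    then have "sact act (sact act x g) (inv g) \<in> B" using assms(2) g unfolding G_invariant_def by simp
    then show False using sact_inv_cancel x g assms(3) by simp
  qed
  then show "sact act x g \<in> A - B" using x g assms(1) unfolding G_invariant_def by blast
qed

lemma G_subcomplex_subset_V: "G_subcomplex G act K L \<Longrightarrow> x \<in> L \<Longrightarrow> x \<subseteq> V"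
  unfolding G_subcomplex_def by blast

lemma G_subcomplex_sact: "G_subcomplex G act K L \<Longrightarrow> x \<in> L \<Longrightarrow> g \<in> carrier G \<Longrightarrow> sact act x g \<in> L"
  unfolding G_subcomplex_def G_invariant_def by blast

section \<open>Orbit collapses\<close>

text \<open>
  The last clause says that the stabiliser of \<phi> fixes \<sigma>; together with the uniqueness of
  the coface \<phi> it is what makes the orbit of \<sigma> independently free.
\<close>

definition collapsible_pair :: "'v set set \<Rightarrow> 'v set \<Rightarrow> 'v set \<Rightarrow> bool" where
  "collapsible_pair L \<sigma> \<phi> \<longleftrightarrow> \<sigma> \<in> L \<and> \<phi> \<in> L \<and> \<sigma> \<subset> \<phi> \<and> card \<phi> = Suc (card \<sigma>) \<and>
     (\<forall>\<tau>\<in>L. \<sigma> \<subset> \<tau> \<longrightarrow> \<tau> = \<phi>) \<and>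
     (\<forall>g\<in>carrier G. \<forall>h\<in>carrier G. sact act \<phi> g = sact act \<phi> h \<longrightarrow> sact act \<sigma> g = sact act \<sigma> h)"

definition orbit_collapse :: "'v set set \<Rightarrow> 'v set \<Rightarrow> 'v set set" where
  "orbit_collapse L \<sigma> = {\<rho>\<in>L. \<forall>g\<in>carrier G. \<not> sact act \<sigma> g \<subseteq> \<rho>}"

lemma orbit_collapse_subset: "orbit_collapse L \<sigma> \<subseteq> L"
  unfolding orbit_collapse_def by blast

lemma orbit_disjoint_orbit_collapse: "x \<in> orbit G act \<sigma> \<Longrightarrow> x \<notin> orbit_collapse L \<sigma>"
  unfolding orbit_iff orbit_collapse_def by blast

lemma G_subcomplex_orbit_collapse:
  assumes L: "G_subcomplex G act K L" and "\<sigma> \<subseteq> V"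
  shows "G_subcomplex G act K (orbit_collapse L \<sigma>)"
proof -
  note sc = G_subcomplex_simplicial_complex[OF L]
  have "simplicial_complex (orbit_collapse L \<sigma>)"
    unfolding simplicial_complex_def
  proof (intro conjI ballI allI impI)
    show "finite (orbit_collapse L \<sigma>)"
      using simplicial_complex_finite[OF sc] orbit_collapse_subset by (rule finite_subset[rotated])
  next
    fix x assume "x \<in> orbit_collapse L \<sigma>"
    then show "finite x" "x \<noteq> {}"
      using orbit_collapse_subset simplicial_complex_finite_simplex[OF sc] simplicial_complex_nonempty[OF sc]
      by blast+
  next
    fix x \<tau> assume "x \<in> orbit_collapse L \<sigma>" "\<tau> \<subseteq> x \<and> \<tau> \<noteq> {}"
    then show "\<tau> \<in> orbit_collapse L \<sigma>"
      using simplicial_complex_face[OF sc] unfolding orbit_collapse_def by blast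
  qed
  moreover have "G_invariant G act (orbit_collapse L \<sigma>)"
    unfolding G_invariant_def
  proof (intro ballI)
    fix x h assume x: "x \<in> orbit_collapse L \<sigma>" and h: "h \<in> carrier G"
    then have "x \<in> L" and x_free: "\<forall>g\<in>carrier G. \<not> sact act \<sigma> g \<subseteq> x"
      unfolding orbit_collapse_def by blast+
    have "\<not> sact act \<sigma> g \<subseteq> sact act x h" if g: "g \<in> carrier G" for g
    proof
      assume "sact act \<sigma> g \<subseteq> sact act x h"
      then have "sact act (sact act \<sigma> g) (inv h) \<subseteq> sact act (sact act x h) (inv h)"
        unfolding sact_def by (rule image_mono)
      then have "sact act \<sigma> (g \<otimes> inv h) \<subseteq> x"
        using sact_mult[OF assms(2) g inv_closed[OF h]]
          sact_inv_cancel[OF G_subcomplex_subset_V[OF L \<open>x \<in> L\<close>] h] by simp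
      then show False using x_free g h by blast
    qed
    then show "sact act x h \<in> orbit_collapse L \<sigma>"
      using G_subcomplex_sact[OF L \<open>x \<in> L\<close> h] unfolding orbit_collapse_def by blast
  qed
  moreover have "orbit_collapse L \<sigma> \<subseteq> K"
    using L orbit_collapse_subset unfolding G_subcomplex_def by blast
  ultimately show ?thesis unfolding G_subcomplex_def by blast
qed

lemma translate_unique_coface:
  assumes L: "G_subcomplex G act K L" and "\<sigma> \<in> L" and unique: "\<forall>\<tau>\<in>L. \<sigma> \<subset> \<tau> \<longrightarrow> \<tau> = \<phi>"
    and g: "g \<in> carrier G" and "\<tau> \<in> L" "sact act \<sigma> g \<subset> \<tau>"
  shows "\<tau> = sact act \<phi> g"
proof -
  have V: "\<sigma> \<subseteq> V" "\<tau> \<subseteq> V" using G_subcomplex_subset_V[OF L] assms by blast+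
  have "sact act (sact act \<sigma> g) (inv g) \<subset> sact act \<tau> (inv g)"
    using sact_psubset_iff[of "sact act \<sigma> g" \<tau> "inv g"] V \<open>sact act \<sigma> g \<subset> \<tau>\<close> g by auto
  then have "\<sigma> \<subset> sact act \<tau> (inv g)" using sact_inv_cancel V g by simp
  then have "sact act \<tau> (inv g) = \<phi>" using unique G_subcomplex_sact[OF L \<open>\<tau> \<in> L\<close> inv_closed[OF g]] by blast
  then show ?thesis using sact_cancel_inv[OF V(2) g] by simp
qed

lemma elementary_G_collapse_imp_collapsible_pair:
  assumes L: "G_subcomplex G act K L" and "elementary_G_collapse G act L L'"
  shows "\<exists>\<sigma> \<phi>. collapsible_pair L \<sigma> \<phi> \<and> L' = orbit_collapse L \<sigma>"
proof -
  obtain \<sigma> where free: "free_simplex L \<sigma>" and card: "card (free_facet L \<sigma>) = card \<sigma> + 1"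
    and indep: "independently_free L (orbit G act \<sigma>)" and L': "L' = orbit_collapse L \<sigma>"
    using assms(2) unfolding elementary_G_collapse_def orbit_collapse_def by blast
  define \<phi> where "\<phi> = free_facet L \<sigma>"
  note sc = G_subcomplex_simplicial_complex[OF L]
  have "\<sigma> \<in> L" and unique_facet: "\<exists>!\<psi>. facet L \<psi> \<and> \<sigma> \<subset> \<psi>"
    using free unfolding free_simplex_def by blast+
  have \<phi>: "facet L \<phi> \<and> \<sigma> \<subset> \<phi>" unfolding \<phi>_def free_facet_def using unique_facet by (rule theI')
  then have "\<phi> \<in> L" unfolding facet_def by blast
  have unique_coface: "\<forall>\<tau>\<in>L. \<sigma> \<subset> \<tau> \<longrightarrow> \<tau> = \<phi>"
  proof (intro ballI impI)
    fix \<tau> assume "\<tau> \<in> L" "\<sigma> \<subset> \<tau>"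
    obtain \<psi> where "facet L \<psi>" "\<tau> \<subseteq> \<psi>" using facet_exists_above[OF sc \<open>\<tau> \<in> L\<close>] by blast
    moreover from \<open>\<sigma> \<subset> \<tau>\<close> \<open>\<tau> \<subseteq> \<psi>\<close> have "\<sigma> \<subset> \<psi>" by (rule less_le_trans)
    ultimately have "\<psi> = \<phi>"
      unfolding \<phi>_def free_facet_def by (intro the1_equality[OF unique_facet, symmetric]) blast
    then have "\<tau> \<subseteq> \<phi>" using \<open>\<tau> \<subseteq> \<psi>\<close> by simp
    have "finite \<phi>" using simplicial_complex_finite_simplex[OF sc \<open>\<phi> \<in> L\<close>] .
    have "card \<sigma> < card \<tau>"
      using psubset_card_mono[OF finite_subset[OF \<open>\<tau> \<subseteq> \<phi>\<close> \<open>finite \<phi>\<close>] \<open>\<sigma> \<subset> \<tau>\<close>] .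
    moreover have "card \<tau> \<le> card \<phi>" using card_mono[OF \<open>finite \<phi>\<close> \<open>\<tau> \<subseteq> \<phi>\<close>] .
    ultimately have "card \<tau> = card \<phi>" using card \<phi>_def by simp
    then show "\<tau> = \<phi>" using card_subset_eq[OF \<open>finite \<phi>\<close> \<open>\<tau> \<subseteq> \<phi>\<close>] by simp
  qed
  have separated: "\<not> (\<exists>\<rho>\<in>L. x \<subseteq> \<rho> \<and> y \<subseteq> \<rho>)"
    if "x \<in> orbit G act \<sigma>" "y \<in> orbit G act \<sigma>" "x \<noteq> y" for x y
    using indep that unfolding independently_free_def by blast
  have stabilizer: "\<forall>g\<in>carrier G. \<forall>h\<in>carrier G. sact act \<phi> g = sact act \<phi> h \<longrightarrow> sact act \<sigma> g = sact act \<sigma> h"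
  proof (intro ballI impI, rule ccontr)
    fix g h assume g: "g \<in> carrier G" and h: "h \<in> carrier G" and eq: "sact act \<phi> g = sact act \<phi> h"
      and "sact act \<sigma> g \<noteq> sact act \<sigma> h"
    moreover have "sact act \<sigma> g \<in> orbit G act \<sigma>" "sact act \<sigma> h \<in> orbit G act \<sigma>"
      using g h unfolding orbit_iff by blast+
    moreover have "sact act \<sigma> g \<subseteq> sact act \<phi> g" "sact act \<sigma> h \<subseteq> sact act \<phi> h"
      using \<phi> unfolding sact_def by auto
    ultimately show False
      using separated G_subcomplex_sact[OF L \<open>\<phi> \<in> L\<close> g] by metis
  qed
  have "card \<phi> = Suc (card \<sigma>)" using card unfolding \<phi>_def by simp
  then have "collapsible_pair L \<sigma> \<phi>"
    unfolding collapsible_pair_def using \<open>\<sigma> \<in> L\<close> \<open>\<phi> \<in> L\<close> \<phi> unique_coface stabilizer by blast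
  then show ?thesis using L' by blast
qed

text \<open>On the orbit of \<sigma> the definite description picks \<phi>g, the unique proper coface of \<sigma>g.\<close>

definition extend_matching :: "'v set set \<Rightarrow> 'v set \<Rightarrow> ('v set \<Rightarrow> 'v set) \<Rightarrow> 'v set \<Rightarrow> 'v set" where
  "extend_matching L \<sigma> \<mu> x = (if x \<in> orbit G act \<sigma> then (THE \<tau>. \<tau> \<in> L \<and> x \<subset> \<tau>) else \<mu> x)"

context
  fixes L \<sigma> \<phi>
  assumes L: "G_subcomplex G act K L" and pair: "collapsible_pair L \<sigma> \<phi>"
begin

lemma pair_in: "\<sigma> \<in> L" "\<phi> \<in> L"
  and pair_psubset: "\<sigma> \<subset> \<phi>"
  and pair_card: "card \<phi> = Suc (card \<sigma>)"
  and pair_unique_coface: "\<forall>\<tau>\<in>L. \<sigma> \<subset> \<tau> \<longrightarrow> \<tau> = \<phi>"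
  and pair_stabilizer:
    "g \<in> carrier G \<Longrightarrow> h \<in> carrier G \<Longrightarrow> sact act \<phi> g = sact act \<phi> h \<Longrightarrow> sact act \<sigma> g = sact act \<sigma> h"
  using pair unfolding collapsible_pair_def by blast+

lemma pair_subset_V: "\<sigma> \<subseteq> V" "\<phi> \<subseteq> V"
  using G_subcomplex_subset_V[OF L] pair_in by blast+

lemma translate_in: "g \<in> carrier G \<Longrightarrow> sact act \<sigma> g \<in> L" "g \<in> carrier G \<Longrightarrow> sact act \<phi> g \<in> L"
  using G_subcomplex_sact[OF L] pair_in by blast+

lemma simplicial_complex_orbit_collapse: "simplicial_complex (orbit_collapse L \<sigma>)"
  using G_subcomplex_simplicial_complex[OF G_subcomplex_orbit_collapse[OF L pair_subset_V(1)]] .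

lemma orbit_subset: "orbit G act \<sigma> \<subseteq> L" "orbit G act \<phi> \<subseteq> L"
  using translate_in unfolding orbit_def by blast+

lemma translate_psubset: "g \<in> carrier G \<Longrightarrow> sact act \<sigma> g \<subset> sact act \<phi> g"
  using sact_psubset_iff[OF pair_subset_V] pair_psubset by simp

lemma translate_neq: "g \<in> carrier G \<Longrightarrow> h \<in> carrier G \<Longrightarrow> sact act \<sigma> g \<noteq> sact act \<phi> h"
  using card_sact[OF pair_subset_V(1), of g] card_sact[OF pair_subset_V(2), of h] pair_card by auto

lemma superset_of_translate:
  "g \<in> carrier G \<Longrightarrow> \<tau> \<in> L \<Longrightarrow> sact act \<sigma> g \<subseteq> \<tau> \<Longrightarrow> \<tau> = sact act \<sigma> g \<or> \<tau> = sact act \<phi> g"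
  using translate_unique_coface[OF L pair_in(1) pair_unique_coface, of g \<tau>] by auto

lemma notin_orbit_collapse_iff:
  assumes "\<rho> \<in> L"
  shows "\<rho> \<notin> orbit_collapse L \<sigma> \<longleftrightarrow> \<rho> \<in> orbit G act \<sigma> \<or> \<rho> \<in> orbit G act \<phi>"
proof
  assume "\<rho> \<notin> orbit_collapse L \<sigma>"
  then obtain g where "g \<in> carrier G" "sact act \<sigma> g \<subseteq> \<rho>" using assms unfolding orbit_collapse_def by blast
  then have "\<rho> = sact act \<sigma> g \<or> \<rho> = sact act \<phi> g" using superset_of_translate assms by blast
  then show "\<rho> \<in> orbit G act \<sigma> \<or> \<rho> \<in> orbit G act \<phi>"
    using \<open>g \<in> carrier G\<close> unfolding orbit_iff by blast
next
  assume "\<rho> \<in> orbit G act \<sigma> \<or> \<rho> \<in> orbit G act \<phi>"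
  then obtain g where "g \<in> carrier G" "\<rho> = sact act \<sigma> g \<or> \<rho> = sact act \<phi> g"
    unfolding orbit_iff by blast
  then have "sact act \<sigma> g \<subseteq> \<rho>" using translate_psubset by blast
  with \<open>g \<in> carrier G\<close> show "\<rho> \<notin> orbit_collapse L \<sigma>" unfolding orbit_collapse_def by blast
qed

lemma translate_free:
  assumes g: "g \<in> carrier G"
  shows "free_simplex L (sact act \<sigma> g)" "free_facet L (sact act \<sigma> g) = sact act \<phi> g"
proof -
  note coface = translate_unique_coface[OF L pair_in(1) pair_unique_coface g]
  have "\<not> sact act \<phi> g \<subset> \<tau>" if "\<tau> \<in> L" for \<tau>
  proof
    assume "sact act \<phi> g \<subset> \<tau>"
    moreover from this have "\<tau> = sact act \<phi> g"
      using coface[OF that] translate_psubset[OF g] by (meson order.strict_trans)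
    ultimately show False by simp
  qed
  then have facet: "facet L (sact act \<phi> g)" unfolding facet_def using translate_in(2)[OF g] by blast
  have "\<psi> = sact act \<phi> g" if "facet L \<psi>" "sact act \<sigma> g \<subset> \<psi>" for \<psi>
    using that coface unfolding facet_def by blast
  then have unique: "\<exists>!\<psi>. facet L \<psi> \<and> sact act \<sigma> g \<subset> \<psi>"
    using facet translate_psubset[OF g] by blast
  then show "free_simplex L (sact act \<sigma> g)" unfolding free_simplex_def using translate_in[OF g] by blast
  show "free_facet L (sact act \<sigma> g) = sact act \<phi> g"
    unfolding free_facet_def using facet translate_psubset[OF g] by (intro the1_equality[OF unique]) blast
qed

lemma independently_free_orbit: "independently_free L (orbit G act \<sigma>)"
  unfolding independently_free_def
proof (intro conjI ballI impI notI)
  fix x assume "x \<in> orbit G act \<sigma>"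
  then show "free_simplex L x" using translate_free unfolding orbit_iff by blast
next
  fix x y assume "x \<in> orbit G act \<sigma>" "y \<in> orbit G act \<sigma>" "x \<noteq> y"
    and "\<exists>\<rho>\<in>L. x \<subseteq> \<rho> \<and> y \<subseteq> \<rho>"
  then obtain g h \<rho> where g: "g \<in> carrier G" "x = sact act \<sigma> g" and h: "h \<in> carrier G" "y = sact act \<sigma> h"
    and \<rho>: "\<rho> \<in> L" "sact act \<sigma> g \<subseteq> \<rho>" "sact act \<sigma> h \<subseteq> \<rho>"
    unfolding orbit_iff by blast
  have "\<rho> = sact act \<phi> g" "\<rho> = sact act \<phi> h"
    using superset_of_translate[OF g(1) \<rho>(1,2)] superset_of_translate[OF h(1) \<rho>(1,3)]
      translate_neq[OF g(1) h(1)] translate_neq[OF h(1) g(1)] \<open>x \<noteq> y\<close> g(2) h(2) by metis+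
  then show False using pair_stabilizer[OF g(1) h(1)] \<open>x \<noteq> y\<close> g(2) h(2) by simp
qed

lemma elementary_G_collapse_orbit_collapse: "elementary_G_collapse G act L (orbit_collapse L \<sigma>)"
proof -
  have "sact act \<sigma> \<one> = \<sigma>" "sact act \<phi> \<one> = \<phi>" using sact_one pair_subset_V by blast+
  then have "free_simplex L \<sigma>" "free_facet L \<sigma> = \<phi>" using translate_free[OF one_closed] by simp_all
  then show ?thesis
    unfolding elementary_G_collapse_def orbit_collapse_def
    using pair_card independently_free_orbit by auto
qed

context
  fixes S \<mu>
  assumes matching: "partial_G_matching G act (orbit_collapse L \<sigma>) S \<mu>"
begin

lemma extend_matching_translate:
  assumes g: "g \<in> carrier G"
  shows "extend_matching L \<sigma> \<mu> (sact act \<sigma> g) = sact act \<phi> g"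
proof -
  have "(THE \<tau>. \<tau> \<in> L \<and> sact act \<sigma> g \<subset> \<tau>) = sact act \<phi> g"
    using translate_in(2)[OF g] translate_psubset[OF g]
      translate_unique_coface[OF L pair_in(1) pair_unique_coface g]
    by (intro the_equality) blast+
  moreover have "sact act \<sigma> g \<in> orbit G act \<sigma>" using g unfolding orbit_iff by blast
  ultimately show ?thesis unfolding extend_matching_def by simp
qed

lemma matched_in_orbit_collapse: "S \<subseteq> orbit_collapse L \<sigma>" "\<mu> ` S \<subseteq> orbit_collapse L \<sigma>"
  using matching unfolding partial_G_matching_def by blast+

lemma extend_matching_matched: "x \<in> S \<Longrightarrow> extend_matching L \<sigma> \<mu> x = \<mu> x"
  using matched_in_orbit_collapse orbit_disjoint_orbit_collapse unfolding extend_matching_def by auto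

lemma extend_matching_matched_image: "extend_matching L \<sigma> \<mu> ` S = \<mu> ` S"
  using extend_matching_matched by (intro image_cong) simp_all

lemma extend_matching_orbit_image: "extend_matching L \<sigma> \<mu> ` orbit G act \<sigma> = orbit G act \<phi>"
  using extend_matching_translate unfolding orbit_def by auto

lemma extend_matching_image:
  "extend_matching L \<sigma> \<mu> ` (S \<union> orbit G act \<sigma>) = \<mu> ` S \<union> orbit G act \<phi>"
  using extend_matching_matched_image extend_matching_orbit_image by (simp add: image_Un)

lemma orbit_collapse_disjoint: "orbit_collapse L \<sigma> \<inter> (orbit G act \<sigma> \<union> orbit G act \<phi>) = {}"
  using notin_orbit_collapse_iff orbit_collapse_subset by blast

lemma partial_G_matching_extend:
  "partial_G_matching G act L (S \<union> orbit G act \<sigma>) (extend_matching L \<sigma> \<mu>)"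
  unfolding partial_G_matching_def
proof (intro conjI ballI)
  note orbit_subset
  then show "S \<union> orbit G act \<sigma> \<subseteq> L"
    using matched_in_orbit_collapse orbit_collapse_subset by blast
  have "orbit G act \<sigma> \<inter> orbit G act \<phi> = {}"
    using translate_neq unfolding orbit_def by blast
  then have "orbit G act \<phi> \<subseteq> L - (S \<union> orbit G act \<sigma>)"
    using \<open>orbit G act \<phi> \<subseteq> L\<close> matched_in_orbit_collapse(1) orbit_collapse_disjoint by blast
  moreover have "\<mu> ` S \<subseteq> L - (S \<union> orbit G act \<sigma>)"
    using matching matched_in_orbit_collapse(2) orbit_collapse_subset[of L \<sigma>] orbit_collapse_disjoint
    unfolding partial_G_matching_def by blast
  ultimately show "extend_matching L \<sigma> \<mu> ` (S \<union> orbit G act \<sigma>) \<subseteq> L - (S \<union> orbit G act \<sigma>)"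
    unfolding extend_matching_image by blast
next
  show "G_invariant G act (S \<union> orbit G act \<sigma>)"
    using matching G_invariant_orbit[OF pair_subset_V(1)]
    unfolding partial_G_matching_def by (blast intro: G_invariant_Un)
next
  have "inj_on (extend_matching L \<sigma> \<mu>) S"
    using matching inj_on_cong[of S "extend_matching L \<sigma> \<mu>" \<mu>] extend_matching_matched
    unfolding partial_G_matching_def by simp
  moreover have "inj_on (extend_matching L \<sigma> \<mu>) (orbit G act \<sigma>)"
  proof (rule inj_onI)
    fix x y assume "x \<in> orbit G act \<sigma>" "y \<in> orbit G act \<sigma>"
      and eq: "extend_matching L \<sigma> \<mu> x = extend_matching L \<sigma> \<mu> y"
    then obtain g h where g: "g \<in> carrier G" "x = sact act \<sigma> g" and h: "h \<in> carrier G" "y = sact act \<sigma> h"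
      unfolding orbit_iff by blast
    then have "sact act \<phi> g = sact act \<phi> h" using eq extend_matching_translate by simp
    then show "x = y" using pair_stabilizer[OF g(1) h(1)] g(2) h(2) by simp
  qed
  moreover have "extend_matching L \<sigma> \<mu> ` S \<inter> extend_matching L \<sigma> \<mu> ` orbit G act \<sigma> = {}"
    unfolding extend_matching_matched_image extend_matching_orbit_image
    using matched_in_orbit_collapse(2) orbit_collapse_disjoint by blast
  ultimately show "inj_on (extend_matching L \<sigma> \<mu>) (S \<union> orbit G act \<sigma>)"
    by (auto simp: inj_on_Un)
next
  fix x g assume "x \<in> S \<union> orbit G act \<sigma>" and g: "g \<in> carrier G"
  then consider "x \<in> S" | h where "h \<in> carrier G" "x = sact act \<sigma> h" unfolding Un_iff orbit_iff by blast
  then show "extend_matching L \<sigma> \<mu> (sact act x g) = sact act (extend_matching L \<sigma> \<mu> x) g"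
  proof cases
    case 1
    then have "sact act x g \<in> S" using matching g unfolding partial_G_matching_def G_invariant_def by blast
    then show ?thesis using 1 g matching extend_matching_matched unfolding partial_G_matching_def by simp
  next
    case (2 h)
    then show ?thesis
      using g extend_matching_translate sact_mult[OF pair_subset_V(1)]
        sact_mult[OF pair_subset_V(2)] by simp
  qed
next
  fix x assume "x \<in> S \<union> orbit G act \<sigma>"
  then consider "x \<in> S" | h where "h \<in> carrier G" "x = sact act \<sigma> h" unfolding Un_iff orbit_iff by blast
  then show "covers L (extend_matching L \<sigma> \<mu> x) x"
  proof cases
    case 1
    have "covers (orbit_collapse L \<sigma>) (\<mu> x) x" using 1 matching unfolding partial_G_matching_def by blast
    then show ?thesis
      using covers_subcomplex_iff[OF G_subcomplex_simplicial_complex[OF L] simplicial_complex_orbit_collapse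
          orbit_collapse_subset] extend_matching_matched[OF 1] by simp
  next
    case (2 h)
    note sc = G_subcomplex_simplicial_complex[OF L]
    have "sact act \<sigma> h \<noteq> {}" using simplicial_complex_nonempty[OF sc translate_in(1)[OF 2(1)]] .
    then show ?thesis
      unfolding covers_iff_card[OF sc] 2(2) extend_matching_translate[OF 2(1)]
      using translate_in[OF 2(1)] translate_psubset[OF 2(1)] card_sact[OF pair_subset_V(1) 2(1)]
        card_sact[OF pair_subset_V(2) 2(1)] pair_card by simp
  qed
qed

lemma acyclic_matching_extend:
  assumes acyclic: "acyclic_matching (orbit_collapse L \<sigma>) S \<mu>"
  shows "acyclic_matching L (S \<union> orbit G act \<sigma>) (extend_matching L \<sigma> \<mu>)"
  unfolding acyclic_matching_iff_no_cyclic_set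
proof
  assume "\<exists>T\<subseteq>S \<union> orbit G act \<sigma>. cyclic_set L (extend_matching L \<sigma> \<mu>) T"
  then obtain T where T: "T \<subseteq> S \<union> orbit G act \<sigma>" and "cyclic_set L (extend_matching L \<sigma> \<mu>) T"
    by blast
  then have "finite T" "T \<noteq> {}"
    and pred: "\<And>x. x \<in> T \<Longrightarrow> \<exists>y\<in>T. y \<noteq> x \<and> covers L (extend_matching L \<sigma> \<mu> y) x"
    unfolding cyclic_set_def by blast+
  note sc = G_subcomplex_simplicial_complex[OF L] simplicial_complex_orbit_collapse
  have "x \<notin> orbit G act \<sigma>" if xT: "x \<in> T" for x
  proof
    assume "x \<in> orbit G act \<sigma>"
    then obtain g where g: "g \<in> carrier G" "x = sact act \<sigma> g" unfolding orbit_iff by blast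
    obtain y where y: "y \<in> T" "y \<noteq> x" and "covers L (extend_matching L \<sigma> \<mu> y) x"
      using pred[OF xT] by blast
    then have sub: "x \<subseteq> extend_matching L \<sigma> \<mu> y" "x \<noteq> {}" unfolding covers_iff_card[OF sc(1)] by auto
    from y(1) T have "y \<in> S \<or> y \<in> orbit G act \<sigma>" by blast
    then consider "y \<in> S" | h where "h \<in> carrier G" "y = sact act \<sigma> h" unfolding orbit_iff by blast
    then show False
    proof cases
      case 1
      then have "\<mu> y \<in> orbit_collapse L \<sigma>" using matched_in_orbit_collapse(2) by blast
      then have "x \<in> orbit_collapse L \<sigma>"
        using simplicial_complex_face[OF sc(2)] sub extend_matching_matched[OF 1] by simp
      then show False using orbit_disjoint_orbit_collapse \<open>x \<in> orbit G act \<sigma>\<close> by blast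
    next
      case (2 h)
      then have "sact act \<sigma> g \<subseteq> sact act \<phi> h" using sub(1) g(2) extend_matching_translate by simp
      then have "sact act \<phi> h = sact act \<phi> g"
        using superset_of_translate[OF g(1) translate_in(2)[OF 2(1)]]
          translate_neq[OF g(1) 2(1)] by metis
      then show False using pair_stabilizer[OF 2(1) g(1)] y(2) g(2) 2(2) by simp
    qed
  qed
  then have "T \<subseteq> S" using T by blast
  moreover have "cyclic_set (orbit_collapse L \<sigma>) \<mu> T"
    unfolding cyclic_set_def
  proof (intro conjI ballI)
    fix x assume "x \<in> T"
    then obtain y where y: "y \<in> T" "y \<noteq> x" "covers L (extend_matching L \<sigma> \<mu> y) x" using pred by blast
    then have "y \<in> S" using \<open>T \<subseteq> S\<close> by blast
    then have "covers (orbit_collapse L \<sigma>) (\<mu> y) x"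
      using y(3) extend_matching_matched covers_subcomplex_iff[OF sc orbit_collapse_subset]
        matched_in_orbit_collapse(2) by auto
    then show "\<exists>y\<in>T. y \<noteq> x \<and> covers (orbit_collapse L \<sigma>) (\<mu> y) x" using y by blast
  qed (use \<open>finite T\<close> \<open>T \<noteq> {}\<close> in auto)
  ultimately show False using acyclic unfolding acyclic_matching_iff_no_cyclic_set by blast
qed

lemma critical_extend:
  "critical L (S \<union> orbit G act \<sigma>) (extend_matching L \<sigma> \<mu>) = critical (orbit_collapse L \<sigma>) S \<mu>"
proof -
  have "L = orbit_collapse L \<sigma> \<union> (orbit G act \<sigma> \<union> orbit G act \<phi>)"
    using notin_orbit_collapse_iff orbit_collapse_subset[of L \<sigma>] orbit_subset by blast
  then show ?thesis
    unfolding critical_def extend_matching_image using orbit_collapse_disjoint by blast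
qed

end
end

section \<open>Collapses and acyclic matchings\<close>

lemma G_collapses_imp_acyclic_matching:
  assumes "(elementary_G_collapse G act)\<^sup>*\<^sup>* L K'" "G_subcomplex G act K L"
  shows "\<exists>S \<mu>. partial_G_matching G act L S \<mu> \<and> acyclic_matching L S \<mu> \<and> critical L S \<mu> = K'"
  using assms
proof (induction rule: converse_rtranclp_induct)
  case base
  have "partial_G_matching G act K' {} id" "acyclic_matching K' {} id" "critical K' {} id = K'"
    unfolding partial_G_matching_def G_invariant_def acyclic_matching_def critical_def by auto
  then show ?case by blast
next
  case (step L L')
  then obtain \<sigma> \<phi> where pair: "collapsible_pair L \<sigma> \<phi>" and L': "L' = orbit_collapse L \<sigma>"
    using elementary_G_collapse_imp_collapsible_pair by blast
  then have "G_subcomplex G act K L'"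
    using G_subcomplex_orbit_collapse pair_subset_V step.prems by blast
  then obtain S \<mu> where "partial_G_matching G act L' S \<mu>" "acyclic_matching L' S \<mu>" "critical L' S \<mu> = K'"
    using step.IH by blast
  then show ?case
    using partial_G_matching_extend acyclic_matching_extend critical_extend step.prems pair L' by metis
qed

context
  fixes L S \<mu>
  assumes L: "G_subcomplex G act K L" and matching: "partial_G_matching G act L S \<mu>"
    and acyclic: "acyclic_matching L S \<mu>"
begin

lemma matching_in: "S \<subseteq> L" "x \<in> S \<Longrightarrow> \<mu> x \<in> L" "x \<in> S \<Longrightarrow> \<mu> x \<notin> S"
  and matching_inj: "inj_on \<mu> S"
  and matching_invariant: "G_invariant G act S"
  and matching_equivariant: "x \<in> S \<Longrightarrow> g \<in> carrier G \<Longrightarrow> \<mu> (sact act x g) = sact act (\<mu> x) g"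
  and matching_covers: "x \<in> S \<Longrightarrow> covers L (\<mu> x) x"
  using matching unfolding partial_G_matching_def by blast+

lemma simplicial_complex_L: "simplicial_complex L"
  using G_subcomplex_simplicial_complex[OF L] .

lemma matching_card: "x \<in> S \<Longrightarrow> card (\<mu> x) = Suc (card x)"
  using matching_covers covers_iff_card[OF simplicial_complex_L] by blast

lemma finite_matched: "finite S"
  using simplicial_complex_finite[OF simplicial_complex_L] matching_in(1) by (rule finite_subset[rotated])

lemma coface_of_matched:
  assumes "simplicial_complex (critical L S \<mu>)" "x \<in> S" "\<tau> \<in> L" "x \<subset> \<tau>"
  shows "\<tau> \<in> S \<union> \<mu> ` S"
proof -
  have "x \<notin> critical L S \<mu>" "x \<noteq> {}"
    using assms(2) matching_covers[OF assms(2)] covers_iff_card[OF simplicial_complex_L]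
    unfolding critical_def by blast+
  then have "\<tau> \<notin> critical L S \<mu>" using simplicial_complex_face[OF assms(1)] assms(4) by blast
  then show ?thesis unfolding critical_def using assms(3) by blast
qed

lemma exists_matched_simplex_with_unique_coface:
  assumes crit: "simplicial_complex (critical L S \<mu>)" and "S \<noteq> {}"
  shows "\<exists>\<sigma>\<in>S. \<forall>\<tau>\<in>L. \<sigma> \<subset> \<tau> \<longrightarrow> \<tau> = \<mu> \<sigma>"
proof (rule ccontr)
  assume "\<not> ?thesis"
  then have other_coface: "\<exists>\<tau>\<in>L. x \<subset> \<tau> \<and> \<tau> \<noteq> \<mu> x" if "x \<in> S" for x
    using that by blast
  define U where "U = S \<union> \<mu> ` S"
  have "finite U" "U \<noteq> {}" unfolding U_def using finite_matched \<open>S \<noteq> {}\<close> by auto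
  define d where "d = Max (card ` U)"
  have d_max: "card y \<le> d" if "y \<in> U" for y
    unfolding d_def using \<open>finite U\<close> that by simp
  have not_top: "x \<in> S \<Longrightarrow> card x < d" for x
    using d_max[of "\<mu> x"] matching_card unfolding U_def by fastforce
  define T where "T = {x\<in>S. card (\<mu> x) = d}"
  have "T \<noteq> {}"
  proof -
    have "d \<in> card ` U" unfolding d_def using \<open>finite U\<close> \<open>U \<noteq> {}\<close> by (intro Max_in) auto
    then obtain y where "y \<in> U" "card y = d" by blast
    then obtain x where "x \<in> S" "y = \<mu> x" unfolding U_def using not_top by fastforce
    then show ?thesis unfolding T_def using \<open>card y = d\<close> by blast
  qed
  have "cyclic_set L \<mu> T"
    unfolding cyclic_set_def
  proof (intro conjI ballI)
    fix x assume "x \<in> T"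
    then have "x \<in> S" "card (\<mu> x) = d" unfolding T_def by blast+
    obtain \<tau> where \<tau>: "\<tau> \<in> L" "x \<subset> \<tau>" "\<tau> \<noteq> \<mu> x" using other_coface[OF \<open>x \<in> S\<close>] by blast
    have "\<tau> \<in> U" unfolding U_def using coface_of_matched[OF crit \<open>x \<in> S\<close> \<tau>(1,2)] .
    have "card x < card \<tau>"
      using psubset_card_mono[OF simplicial_complex_finite_simplex[OF simplicial_complex_L \<tau>(1)] \<tau>(2)] .
    then have "card \<tau> = d"
      using d_max[OF \<open>\<tau> \<in> U\<close>] matching_card[OF \<open>x \<in> S\<close>] \<open>card (\<mu> x) = d\<close> by simp
    then obtain y where "y \<in> S" "\<tau> = \<mu> y" using \<open>\<tau> \<in> U\<close> not_top unfolding U_def by fastforce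
    then have "y \<in> T" "y \<noteq> x" "covers L (\<mu> y) x"
      unfolding T_def covers_iff_card[OF simplicial_complex_L]
      using \<tau> \<open>card \<tau> = d\<close> matching_card[OF \<open>x \<in> S\<close>] \<open>card (\<mu> x) = d\<close>
        simplicial_complex_nonempty[OF simplicial_complex_L] matching_in(1) \<open>x \<in> S\<close> by auto
    then show "\<exists>y\<in>T. y \<noteq> x \<and> covers L (\<mu> y) x" by blast
  qed (use finite_matched \<open>T \<noteq> {}\<close> in \<open>auto simp: T_def\<close>)
  moreover have "T \<subseteq> S" unfolding T_def by blast
  ultimately show False using acyclic unfolding acyclic_matching_iff_no_cyclic_set by blast
qed

context
  fixes \<sigma>
  assumes \<sigma>: "\<sigma> \<in> S" and unique_coface: "\<forall>\<tau>\<in>L. \<sigma> \<subset> \<tau> \<longrightarrow> \<tau> = \<mu> \<sigma>"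
begin

lemma orbit_in_matching: "orbit G act \<sigma> \<subseteq> S"
  using matching_invariant \<sigma> unfolding G_invariant_def orbit_def by blast

lemma matching_orbit_image: "\<mu> ` orbit G act \<sigma> = orbit G act (\<mu> \<sigma>)"
  using matching_equivariant[OF \<sigma>] unfolding orbit_def by auto

lemma collapsible_pair_matched: "collapsible_pair L \<sigma> (\<mu> \<sigma>)"
proof -
  have "sact act \<sigma> g = sact act \<sigma> h"
    if "g \<in> carrier G" "h \<in> carrier G" "sact act (\<mu> \<sigma>) g = sact act (\<mu> \<sigma>) h" for g h
  proof -
    have "sact act \<sigma> g \<in> S" "sact act \<sigma> h \<in> S" using orbit_in_matching that(1,2) unfolding orbit_def by blast+
    moreover have "\<mu> (sact act \<sigma> g) = \<mu> (sact act \<sigma> h)" using matching_equivariant[OF \<sigma>] that by simp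
    ultimately show ?thesis using matching_inj by (simp add: inj_on_eq_iff)
  qed
  moreover have "\<sigma> \<in> L" "\<mu> \<sigma> \<in> L" "\<sigma> \<subset> \<mu> \<sigma>" "card (\<mu> \<sigma>) = Suc (card \<sigma>)"
    using matching_in \<sigma> matching_covers[OF \<sigma>] unfolding covers_def by (auto simp: matching_card[OF \<sigma>])
  ultimately show ?thesis unfolding collapsible_pair_def using unique_coface by blast
qed

lemma orbit_collapse_matched: "orbit_collapse L \<sigma> = L - (orbit G act \<sigma> \<union> \<mu> ` orbit G act \<sigma>)"
  using notin_orbit_collapse_iff[OF L collapsible_pair_matched] orbit_collapse_subset[of L \<sigma>]
  unfolding matching_orbit_image by blast

lemma partial_G_matching_restrict:
  "partial_G_matching G act (orbit_collapse L \<sigma>) (S - orbit G act \<sigma>) \<mu>"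
  unfolding partial_G_matching_def
proof (intro conjI ballI)
  have "S \<inter> \<mu> ` S = {}" using matching_in(3) by blast
  then have "S - orbit G act \<sigma> \<subseteq> orbit_collapse L \<sigma>"
    unfolding orbit_collapse_matched using matching_in(1) orbit_in_matching by blast
  moreover have "\<mu> ` (S - orbit G act \<sigma>) \<subseteq> orbit_collapse L \<sigma> - (S - orbit G act \<sigma>)"
  proof (rule image_subsetI)
    fix x assume x: "x \<in> S - orbit G act \<sigma>"
    then have "\<mu> x \<notin> \<mu> ` orbit G act \<sigma>"
      using inj_on_image_mem_iff[OF matching_inj _ orbit_in_matching] by blast
    then show "\<mu> x \<in> orbit_collapse L \<sigma> - (S - orbit G act \<sigma>)"
      unfolding orbit_collapse_matched using matching_in(2,3) orbit_in_matching x by blast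
  qed
  ultimately show "S - orbit G act \<sigma> \<subseteq> orbit_collapse L \<sigma>"
    "\<mu> ` (S - orbit G act \<sigma>) \<subseteq> orbit_collapse L \<sigma> - (S - orbit G act \<sigma>)" by blast+
  show "G_invariant G act (S - orbit G act \<sigma>)"
    using matching_invariant G_invariant_orbit G_subcomplex_subset_V[OF L] matching_in(1) \<sigma>
    by (intro G_invariant_Diff) blast+
  show "inj_on \<mu> (S - orbit G act \<sigma>)" using matching_inj by (rule inj_on_subset) blast
  fix x assume x: "x \<in> S - orbit G act \<sigma>"
  then show "\<mu> (sact act x g) = sact act (\<mu> x) g" if "g \<in> carrier G" for g
    using matching_equivariant that by blast
  have "\<mu> x \<in> orbit_collapse L \<sigma>" using \<open>\<mu> ` (S - orbit G act \<sigma>) \<subseteq> _\<close> x by blast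
  then show "covers (orbit_collapse L \<sigma>) (\<mu> x) x"
    using matching_covers x covers_subcomplex_iff[OF simplicial_complex_L
        simplicial_complex_orbit_collapse[OF L collapsible_pair_matched] orbit_collapse_subset] by blast
qed

lemma acyclic_matching_restrict: "acyclic_matching (orbit_collapse L \<sigma>) (S - orbit G act \<sigma>) \<mu>"
  using acyclic_matching_subcomplex[OF acyclic _ simplicial_complex_L
      simplicial_complex_orbit_collapse[OF L collapsible_pair_matched] orbit_collapse_subset] by blast

lemma critical_restrict: "critical (orbit_collapse L \<sigma>) (S - orbit G act \<sigma>) \<mu> = critical L S \<mu>"
  unfolding critical_def orbit_collapse_matched using orbit_in_matching by blast

lemma card_Diff_orbit_less: "card (S - orbit G act \<sigma>) < card S"
proof -
  have "\<sigma> \<in> S \<inter> orbit G act \<sigma>"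
    using \<sigma> self_in_orbit G_subcomplex_subset_V[OF L] matching_in(1) by blast
  then have "S - orbit G act \<sigma> \<subset> S" by blast
  with finite_matched show ?thesis by (rule psubset_card_mono)
qed

end

end

lemma acyclic_matching_imp_G_collapses:
  assumes "G_subcomplex G act K L" "partial_G_matching G act L S \<mu>" "acyclic_matching L S \<mu>"
    and "simplicial_complex (critical L S \<mu>)"
  shows "(elementary_G_collapse G act)\<^sup>*\<^sup>* L (critical L S \<mu>)"
  using assms
proof (induction "card S" arbitrary: L S rule: less_induct)
  case less
  show ?case
  proof (cases "S = {}")
    case True
    then show ?thesis unfolding critical_def by simp
  next
    case False
    then obtain \<sigma> where \<sigma>: "\<sigma> \<in> S" "\<forall>\<tau>\<in>L. \<sigma> \<subset> \<tau> \<longrightarrow> \<tau> = \<mu> \<sigma>"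
      using exists_matched_simplex_with_unique_coface[OF less.prems] by blast
    note pair = collapsible_pair_matched[OF less.prems(1-3) \<sigma>]
    have "(elementary_G_collapse G act)\<^sup>*\<^sup>* (orbit_collapse L \<sigma>) (critical L S \<mu>)"
      using less.hyps[OF card_Diff_orbit_less[OF less.prems(1-3) \<sigma>]
          G_subcomplex_orbit_collapse[OF less.prems(1) pair_subset_V(1)[OF less.prems(1) pair]]
          partial_G_matching_restrict[OF less.prems(1-3) \<sigma>] acyclic_matching_restrict[OF less.prems(1-3) \<sigma>]]
        critical_restrict[OF less.prems(1-3) \<sigma>] less.prems(4) by simp
    then show ?thesis
      using elementary_G_collapse_orbit_collapse[OF less.prems(1) pair] by (rule converse_rtranclp_into_rtranclp[rotated])
  qed
qed

end

theorem mainTheorem4: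
  fixes G :: "('g, 'b) monoid_scheme" and act :: "'v \<Rightarrow> 'g \<Rightarrow> 'v"
    and K K' :: "'v set set"
  assumes "group G" and "finite (carrier G)"
    and "simplicial_G_complex G act K"
    and "G_subcomplex G act K K'"
  shows "G_collapses G act K K' \<longleftrightarrow>
    (\<exists>S \<mu>. partial_G_matching G act K S \<mu> \<and> acyclic_matching K S \<mu> \<and> critical K S \<mu> = K')"
proof -
  interpret G_complex G act K
    using assms(1,3) by (intro G_complex.intro G_complex_axioms.intro)
  have K: "G_subcomplex G act K K"
    using assms(3) unfolding simplicial_G_complex_def G_subcomplex_def by blast
  have K': "simplicial_complex K'" using assms(4) by (rule G_subcomplex_simplicial_complex)
  show ?thesis
    unfolding G_collapses_def
    using G_collapses_imp_acyclic_matching[OF _ K] acyclic_matching_imp_G_collapses[OF K] K' by metis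
qed

end
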